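(* Let $K$ be a field with a non-trivial non-Archimedean valuation $|\cdot|$, let $X$ be a complete non-Archimedean normed space over $K$, fix $k\in\mathbb N$ with $|2k^4|\neq0$, and for $f:G\to X$ let $$\Delta f(x,y)=f(kx+y)+f(kx-y)-k^2[f(x+y)+f(x-y)]-2k^2(k^2-1)f(x)+2(k^2-1)f(y).$$ Let $\beta:[0,\infty)\to[0,\infty)$ be a function satisfying (i) $\beta(|k|t)\le\beta(|k|)\beta(t)$ for all $t\ge0$, and (ii) $\beta(|k|)<|k|^4$. Let $\delta>0$, let $G$ be a normed space, and let $f:G\to X$ satisfy $$\|\Delta f(x,y)\|\le\delta[\beta(\|x\|)+\beta(\|y\|)]\quad\text{for all }x,y\in G.$$ Then there exists a unique quartic mapping $Q:G\to X$ (i.e. $\Delta Q(x,y)=0$ for all $x,y\in G$) such that $$\|f(x)-Q(x)\|\le\frac{1}{|2k^4|}\delta\,\beta(\|x\|)\quad\text{for all }x\in G.$$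
   Context: A non-Archimedean field is a field $K$ with $|\cdot|:K\to[0,\infty)$ such that $|r|=0$ iff $r=0$, $|rs|=|r||s|$, $|r+s|\le\max\{|r|,|s|\}$. A non-Archimedean norm on a $K$-vector space satisfies $\|x\|=0$ iff $x=0$, $\|rx\|=|r|\|x\|$, $\|x+y\|\le\max\{\|x\|,\|y\|\}$. Integers are regarded as elements of $K$ and $|k|$ is the valuation of $k$ in $K$. *)

theory Defs
  imports Complex_Main
begin

definition nonarch_absval :: "('k::field \<Rightarrow> real) \<Rightarrow> bool" where
  "nonarch_absval av \<longleftrightarrow>
     (\<forall>r. av r \<ge> 0) \<and> (\<forall>r. av r = 0 \<longleftrightarrow> r = 0) \<and>
     (\<forall>r s. av (r * s) = av r * av s) \<and>
     (\<forall>r s. av (r + s) \<le> max (av r) (av s))"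

definition nontrivial_absval :: "('k::field \<Rightarrow> real) \<Rightarrow> bool" where
  "nontrivial_absval av \<longleftrightarrow> (\<exists>r. av r \<noteq> 0 \<and> av r \<noteq> 1)"

definition normed_space_over ::
  "('k::field \<Rightarrow> real) \<Rightarrow> ('k \<Rightarrow> 'v::ab_group_add \<Rightarrow> 'v) \<Rightarrow> ('v \<Rightarrow> real) \<Rightarrow> bool" where
  "normed_space_over av sc nm \<longleftrightarrow> vector_space sc \<and>
     (\<forall>x. nm x \<ge> 0) \<and> (\<forall>x. nm x = 0 \<longleftrightarrow> x = 0) \<and>
     (\<forall>r x. nm (sc r x) = av r * nm x) \<and>
     (\<forall>x y. nm (x + y) \<le> nm x + nm y)"

definition nonarch_normed_space ::
  "('k::field \<Rightarrow> real) \<Rightarrow> ('k \<Rightarrow> 'v::ab_group_add \<Rightarrow> 'v) \<Rightarrow> ('v \<Rightarrow> real) \<Rightarrow> bool" where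
  "nonarch_normed_space av sc nm \<longleftrightarrow> vector_space sc \<and>
     (\<forall>x. nm x \<ge> 0) \<and> (\<forall>x. nm x = 0 \<longleftrightarrow> x = 0) \<and>
     (\<forall>r x. nm (sc r x) = av r * nm x) \<and>
     (\<forall>x y. nm (x + y) \<le> max (nm x) (nm y))"

definition complete_wrt :: "('v::ab_group_add \<Rightarrow> real) \<Rightarrow> bool" where
  "complete_wrt nm \<longleftrightarrow>
     (\<forall>s::nat \<Rightarrow> 'v. (\<forall>e>0. \<exists>N. \<forall>m\<ge>N. \<forall>n\<ge>N. nm (s m - s n) < e) \<longrightarrow>
        (\<exists>L. (\<lambda>n. nm (s n - L)) \<longlonglongrightarrow> 0))"

definition quartic_diff ::
  "('k::field \<Rightarrow> 'g::ab_group_add \<Rightarrow> 'g) \<Rightarrow> ('k \<Rightarrow> 'x::ab_group_add \<Rightarrow> 'x) \<Rightarrow> nat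
    \<Rightarrow> ('g \<Rightarrow> 'x) \<Rightarrow> 'g \<Rightarrow> 'g \<Rightarrow> 'x" where
  "quartic_diff scG scX k f x y =
     f (scG (of_nat k) x + y) + f (scG (of_nat k) x - y)
     - scX (of_nat (k^2)) (f (x + y) + f (x - y))
     - scX (of_int (2 * int k^2 * (int k^2 - 1))) (f x)
     + scX (of_int (2 * (int k^2 - 1))) (f y)"

end

theory Submission
  imports Defs
begin

(* Hyers' direct method, made sharp by the strong triangle inequality.  Putting y = 0 gives
   f(kx)/k^4 - f(x) = \<Delta>f(x,0)/(2k^4), so the rescalings A_n f(x) = f(k^n x)/k^(4n) have
   consecutive differences of norm at most r^n \<delta> \<beta>(\<parallel>x\<parallel>)/|2k^4| with r = \<beta>(|k|)/|k|^4 < 1.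
   In an ultrametric space these steps do not accumulate: the A_n f form a Cauchy sequence whose
   limit Q lies within the first step's bound of f.  The defect of A_n f decays like r^n, so Q is
   quartic; a quartic map is fixed by the rescaling, which shrinks the distance between two
   quartic approximants of f by r^n, whence uniqueness. *)

context
  fixes av :: "'k::field \<Rightarrow> real"
  assumes av: "nonarch_absval av"
begin

lemma absval_nonneg: "av r \<ge> 0"
  and absval_eq_0_iff: "av r = 0 \<longleftrightarrow> r = 0"
  and absval_mult: "av (r * s) = av r * av s"
  and absval_add_le_max: "av (r + s) \<le> max (av r) (av s)"
  using av unfolding nonarch_absval_def by blast+

lemma absval_one: "av 1 = 1"
  using absval_mult[of 1 1] absval_eq_0_iff[of 1] by simp

lemma absval_minus: "av (- r) = av r"
proof -
  have "av (-1) * av (-1) = 1"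
    using absval_mult[of "-1" "-1"] absval_one by simp
  then have "av (-1) = 1"
    using absval_nonneg[of "-1"] by (simp add: power2_eq_square[symmetric] power2_eq_1_iff)
  then show ?thesis
    using absval_mult[of "-1" r] by simp
qed

lemma absval_of_nat_le_one: "av (of_nat n) \<le> 1"
proof (induction n)
  case 0
  then show ?case using absval_eq_0_iff[of 0] by simp
next
  case (Suc n)
  have "av (1 + of_nat n) \<le> max (av 1) (av (of_nat n))"
    by (rule absval_add_le_max)
  then show ?case using Suc absval_one by simp
qed

lemma absval_of_int_le_one: "av (of_int m) \<le> 1"
proof (cases "m \<ge> 0")
  case True
  then have "(of_int m :: 'k) = of_nat (nat m)" by simp
  then show ?thesis using absval_of_nat_le_one by simp
next
  case False
  then have "(of_int m :: 'k) = - of_nat (nat (- m))" by simp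
  then show ?thesis using absval_of_nat_le_one absval_minus by simp
qed

lemma absval_power: "av (r ^ n) = av r ^ n"
  by (induction n) (simp_all add: absval_one absval_mult)

lemma absval_inverse: "av (inverse r) = inverse (av r)"
proof (cases "r = 0")
  case False
  then have "av r * av (inverse r) = 1" and "av r \<noteq> 0"
    using absval_mult[of r "inverse r"] absval_one absval_eq_0_iff by simp_all
  then show ?thesis by (simp add: field_simps)
qed (use absval_eq_0_iff[of 0] in simp)

end

locale nonarch_space =
  fixes av :: "'k::field \<Rightarrow> real" and sc :: "'k \<Rightarrow> 'v::ab_group_add \<Rightarrow> 'v"
    and nm :: "'v \<Rightarrow> real"
  assumes absval: "nonarch_absval av" and space: "nonarch_normed_space av sc nm"
begin

sublocale vector_space sc
  using space unfolding nonarch_normed_space_def by blast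

lemma norm_nonneg: "nm v \<ge> 0"
  and norm_eq_0_iff: "nm v = 0 \<longleftrightarrow> v = 0"
  and norm_scale: "nm (sc r v) = av r * nm v"
  and norm_add_le_max: "nm (u + v) \<le> max (nm u) (nm v)"
  using space unfolding nonarch_normed_space_def by blast+

lemma norm_zero [simp]: "nm 0 = 0"
  using norm_eq_0_iff by simp

lemma norm_minus: "nm (- v) = nm v"
  using norm_scale[of "-1" v] absval_minus[OF absval, of 1] absval_one[OF absval] by simp

lemma norm_minus_commute: "nm (u - v) = nm (v - u)"
  by (metis minus_diff_eq norm_minus)

lemma norm_diff_le_max: "nm (u - v) \<le> max (nm u) (nm v)"
  using norm_add_le_max[of u "- v"] norm_minus by simp

lemma norm_diff_triangle: "nm (u - w) \<le> max (nm (u - v)) (nm (v - w))"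
  using norm_add_le_max[of "u - v" "v - w"] by simp

lemma norm_add_le: "nm (u + v) \<le> nm u + nm v"
  using norm_add_le_max[of u v] norm_nonneg[of u] norm_nonneg[of v] by linarith

lemma norm_scale_of_int_le: "nm (sc (of_int m) v) \<le> nm v"
  using mult_right_mono[OF absval_of_int_le_one[OF absval, of m] norm_nonneg[of v]]
  by (simp add: norm_scale)

lemma zero_if_norm_le_null:
  assumes "\<And>n. nm v \<le> b n" and "b \<longlonglongrightarrow> 0"
  shows "v = 0"
proof -
  have "nm v \<le> 0"
    using assms by (intro LIMSEQ_le_const) auto
  then show ?thesis using norm_nonneg[of v] norm_eq_0_iff by simp
qed

lemma norm_diff_le_of_steps:
  assumes steps: "\<And>n. nm (F (Suc n) - F n) \<le> b n" and b: "antimono b" and "n \<le> m"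
  shows "nm (F m - F n) \<le> b n"
  using \<open>n \<le> m\<close>
proof (induction m rule: dec_induct)
  case base
  show ?case using steps[of n] norm_nonneg[of "F (Suc n) - F n"] by simp
next
  case (step m)
  have "b m \<le> b n" using b \<open>n \<le> m\<close> by (simp add: antimonoD)
  then show ?case
    using norm_diff_triangle[of "F (Suc m)" "F n" "F m"] steps[of m] step.IH by linarith
qed

lemma convergent_of_steps:
  assumes complete: "complete_wrt nm"
    and steps: "\<And>n. nm (F (Suc n) - F n) \<le> b n" and b: "antimono b" "b \<longlonglongrightarrow> 0"
  shows "\<exists>L. (\<lambda>n. nm (F n - L)) \<longlonglongrightarrow> 0"
proof -
  have "\<exists>N. \<forall>m\<ge>N. \<forall>n\<ge>N. nm (F m - F n) < e" if "e > 0" for e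
  proof -
    obtain N where N: "b N < e"
      using order_tendstoD(2)[OF b(2) \<open>e > 0\<close>] by (auto simp: eventually_sequentially)
    have "nm (F m - F n) < e" if "m \<ge> N" "n \<ge> N" for m n
    proof -
      have "nm (F m - F n) \<le> b (min m n)"
      proof (cases "n \<le> m")
        case True
        then show ?thesis using norm_diff_le_of_steps[OF steps b(1) True] by simp
      next
        case False
        then show ?thesis using norm_diff_le_of_steps[OF steps b(1), of m n]
          by (simp add: norm_minus_commute[of "F m"])
      qed
      also have "\<dots> \<le> b N" using b(1) that by (simp add: antimonoD)
      finally show ?thesis using N by linarith
    qed
    then show ?thesis by blast
  qed
  then show ?thesis using complete unfolding complete_wrt_def by blast
qed

lemma norm_limit_le:
  assumes lim: "(\<lambda>n. nm (F n - L)) \<longlonglongrightarrow> 0" and bound: "\<And>n. nm (F n - v) \<le> e"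
  shows "nm (L - v) \<le> e"
proof (rule LIMSEQ_le_const)
  show "(\<lambda>n. e + nm (F n - L)) \<longlonglongrightarrow> e"
    using tendsto_add[OF tendsto_const lim] by simp
  have "nm (L - v) \<le> e + nm (F n - L)" for n
    using norm_diff_triangle[of L v "F n"] bound[of n] norm_minus_commute[of L "F n"]
      norm_nonneg[of "F n - L"] norm_nonneg[of "F n - v"] by (simp add: max_def split: if_splits)
  then show "\<exists>N. \<forall>n\<ge>N. nm (L - v) \<le> e + nm (F n - L)"
    by blast
qed

end

locale quartic_ops = X: vector_space scX + G: vector_space scG
  for scX :: "'k::field \<Rightarrow> 'x::ab_group_add \<Rightarrow> 'x" and scG :: "'k \<Rightarrow> 'g::ab_group_add \<Rightarrow> 'g" +
  fixes k :: nat
begin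

abbreviation \<Delta> :: "('g \<Rightarrow> 'x) \<Rightarrow> 'g \<Rightarrow> 'g \<Rightarrow> 'x" where
  "\<Delta> \<equiv> quartic_diff scG scX k"

abbreviation c :: 'k where
  "c \<equiv> of_nat k"

lemma quartic_diff_eq:
  "\<Delta> g x y = g (scG c x + y) + g (scG c x - y) - scX (c^2) (g (x + y) + g (x - y))
     - scX (2 * c^2 * (c^2 - 1)) (g x) + scX (2 * (c^2 - 1)) (g y)"
  unfolding quartic_diff_def by simp

lemma quartic_diff_zero_right:
  "\<Delta> g x 0 = scX 2 (g (scG c x)) - scX (2 * c^4) (g x) + scX (2 * (c^2 - 1)) (g 0)"
proof -
  have double: "v + v = scX 2 v" for v
    using X.scale_left_distrib[of 1 1 v] by simp
  have "(2::'k) * c^4 = 2 * c^2 + 2 * c^2 * (c^2 - 1)"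
    by (simp add: algebra_simps power4_eq_xxxx power2_eq_square)
  then have "scX (2 * c^4) (g x) = scX (c^2) (g x + g x) + scX (2 * c^2 * (c^2 - 1)) (g x)"
    by (simp add: double mult.commute X.scale_left_distrib)
  then show ?thesis
    unfolding quartic_diff_eq by (simp add: double[symmetric])
qed

lemma quartic_diff_zero_zero: "\<Delta> g 0 0 = - scX (2 * c^2 * (c^2 - 1)) (g 0)"
proof -
  have "\<Delta> g 0 0 = scX (2 - 2 * c^4 + 2 * (c^2 - 1)) (g 0)"
    using quartic_diff_zero_right[of g 0]
    by (simp add: X.scale_left_distrib X.scale_left_diff_distrib)
  also have "(2::'k) - 2 * c^4 + 2 * (c^2 - 1) = - (2 * c^2 * (c^2 - 1))"
    by (simp add: algebra_simps power4_eq_xxxx power2_eq_square)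
  finally show ?thesis by simp
qed

lemma rescale_step_eq:
  assumes "(2::'k) \<noteq> 0" "c \<noteq> 0" "\<Delta> g 0 0 = 0"
  shows "scX (inverse (c^4)) (g (scG c x)) - g x = scX (inverse (2 * c^4)) (\<Delta> g x 0)"
proof -
  have "scX (2 * (c^2 - 1)) (g 0) = scX (inverse (c^2)) (scX (2 * c^2 * (c^2 - 1)) (g 0))"
    using \<open>c \<noteq> 0\<close> by (simp add: field_simps)
  also have "\<dots> = 0"
    using \<open>\<Delta> g 0 0 = 0\<close> by (simp add: quartic_diff_zero_zero)
  finally have "\<Delta> g x 0 = scX 2 (g (scG c x)) - scX (2 * c^4) (g x)"
    by (simp add: quartic_diff_zero_right)
  then have "scX (inverse (2 * c^4)) (\<Delta> g x 0)
      = scX (inverse (2 * c^4) * 2) (g (scG c x)) - scX (inverse (2 * c^4) * (2 * c^4)) (g x)"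
    by (simp add: X.scale_right_diff_distrib)
  also have "inverse (2 * c^4) * 2 = inverse (c^4)"
    using assms by (simp add: field_simps)
  also have "inverse (2 * c^4) * (2 * c^4) = 1"
    using assms by simp
  finally show ?thesis by simp
qed

lemma quartic_diff_rescale:
  "\<Delta> (\<lambda>z. scX u (g (scG t z))) x y = scX u (\<Delta> g (scG t x) (scG t y))"
proof -
  have "scG t (scG c x + y) = scG c (scG t x) + scG t y"
    and "scG t (scG c x - y) = scG c (scG t x) - scG t y"
    by (simp_all add: G.scale_right_distrib G.scale_right_diff_distrib mult.commute)
  then show ?thesis
    unfolding quartic_diff_def
    by (simp add: G.scale_right_distrib G.scale_right_diff_distrib X.scale_right_distrib
        X.scale_right_diff_distrib X.scale_left_commute[of u] mult.commute)
qed

lemma quartic_diff_diff: "\<Delta> (\<lambda>z. g z - h z) x y = \<Delta> g x y - \<Delta> h x y"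
  unfolding quartic_diff_def
  by (simp add: algebra_simps)

lemma quartic_eq_rescaled:
  assumes "(2::'k) \<noteq> 0" "c \<noteq> 0" and quartic: "\<And>x y. \<Delta> P x y = 0"
  shows "P x = scX (inverse (c^4) ^ n) (P (scG (c^n) x))"
proof (induction n arbitrary: x)
  case (Suc n)
  have "P x = scX (inverse (c^4)) (P (scG c x))"
    using rescale_step_eq[OF assms(1,2) quartic, of x] quartic by simp
  also have "\<dots> = scX (inverse (c^4) ^ Suc n) (P (scG (c ^ Suc n) x))"
    using Suc.IH[of "scG c x"] by (simp add: mult.commute)
  finally show ?case .
qed simp

end

locale quartic_stability = X: nonarch_space av scX nX + quartic_ops scX scG k
  for av :: "'k::field \<Rightarrow> real" and scX :: "'k \<Rightarrow> 'x::ab_group_add \<Rightarrow> 'x" and nX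
    and scG :: "'k \<Rightarrow> 'g::ab_group_add \<Rightarrow> 'g" and k +
  fixes nG :: "'g \<Rightarrow> real" and \<beta> :: "real \<Rightarrow> real" and \<delta> :: real and f :: "'g \<Rightarrow> 'x"
  assumes G: "normed_space_over av scG nG" and complete: "complete_wrt nX"
    and k: "av (of_nat (2 * k^4)) \<noteq> 0"
    and \<beta>_nonneg: "\<forall>t\<ge>0. \<beta> t \<ge> 0"
    and \<beta>_mult: "\<forall>t\<ge>0. \<beta> (av (of_nat k) * t) \<le> \<beta> (av (of_nat k)) * \<beta> t"
    and \<beta>_less: "\<beta> (av (of_nat k)) < av (of_nat k) ^ 4"
    and \<delta>: "\<delta> > 0"
    and ineq: "\<forall>x y. nX (quartic_diff scG scX k f x y) \<le> \<delta> * (\<beta> (nG x) + \<beta> (nG y))"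
begin

lemma norm_quartic_diff_le:
  assumes "\<And>z. z \<in> {scG c x + y, scG c x - y, x + y, x - y, x, y} \<Longrightarrow> nX (g z) \<le> e"
  shows "nX (\<Delta> g x y) \<le> e"
proof -
  have add: "nX (u + v) \<le> e" and diff: "nX (u - v) \<le> e" if "nX u \<le> e" "nX v \<le> e" for u v
    using that X.norm_add_le_max[of u v] X.norm_diff_le_max[of u v] by simp_all
  \<comment> \<open>the integer coefficients of \<open>\<Delta>\<close> have absolute value at most 1\<close>
  have scale: "nX (scX (of_int m) u) \<le> e" if "nX u \<le> e" for m u
    using that X.norm_scale_of_int_le[of m u] by simp
  have "nX (scX (of_nat (k^2)) (g (x + y) + g (x - y))) \<le> e"
    using scale[of "g (x + y) + g (x - y)" "int (k^2)"] add assms by simp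
  then show ?thesis
    unfolding quartic_diff_def by (intro add diff scale) (simp_all add: assms)
qed

abbreviation a :: real where
  "a \<equiv> av c"

abbreviation r :: real where
  "r \<equiv> \<beta> a / a^4"

lemma two_k4_nonzero: "(2::'k) * c^4 \<noteq> 0"
  using k absval_eq_0_iff[OF X.absval, of "of_nat (2 * k^4)"] by simp

lemma a_pos: "a > 0"
  using two_k4_nonzero absval_eq_0_iff[OF X.absval, of c] absval_nonneg[OF X.absval, of c]
  by fastforce

lemma \<beta>_power_le: "t \<ge> 0 \<Longrightarrow> \<beta> (a^n * t) \<le> \<beta> a ^ n * \<beta> t"
proof (induction n)
  case (Suc n)
  have "\<beta> (a * (a^n * t)) \<le> \<beta> a * \<beta> (a^n * t)"
    using \<beta>_mult Suc.prems a_pos by simp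
  also have "\<dots> \<le> \<beta> a * (\<beta> a ^ n * \<beta> t)"
    using Suc \<beta>_nonneg a_pos by (simp add: mult_left_mono)
  finally show ?case by (simp add: mult.assoc)
qed simp

lemma r_nonneg: "r \<ge> 0"
  using \<beta>_nonneg a_pos by simp

lemma r_less_one: "r < 1"
  using \<beta>_less a_pos by simp

lemma \<beta>_zero: "\<beta> 0 = 0"
proof -
  have "a^4 \<le> 1"
    using a_pos absval_of_nat_le_one[OF X.absval, of k] by (simp add: power_le_one)
  then have "\<beta> a < 1" using \<beta>_less by simp
  moreover have "\<beta> 0 \<le> \<beta> a * \<beta> 0" "\<beta> 0 \<ge> 0"
    using \<beta>_mult[rule_format, of 0] \<beta>_nonneg by simp_all
  ultimately show ?thesis by (simp add: mult_le_cancel_right1)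
qed

lemma \<beta>_rescale_le:
  assumes "t \<ge> 0" shows "inverse (a^4) ^ n * \<beta> (a^n * t) \<le> r^n * \<beta> t"
proof -
  have "inverse (a^4) ^ n * \<beta> (a^n * t) \<le> inverse (a^4) ^ n * (\<beta> a ^ n * \<beta> t)"
    using \<beta>_power_le[OF assms] a_pos by (simp add: mult_left_mono)
  then show ?thesis by (simp add: power_divide divide_inverse power_mult_distrib power_inverse mult_ac)
qed

lemma norm_rescale: "nX (scX (inverse (c^4) ^ n) v) = inverse (a^4) ^ n * nX v"
  by (simp add: X.norm_scale absval_power[OF X.absval] absval_inverse[OF X.absval])

lemma nG_nonneg: "nG x \<ge> 0"
  and nG_rescale: "nG (scG (c^n) x) = a^n * nG x"
  using G unfolding normed_space_over_def by (simp_all add: absval_power[OF X.absval])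

lemma nG_zero: "nG 0 = 0"
  using G unfolding normed_space_over_def by simp

definition error_bound :: "'g \<Rightarrow> real" where
  "error_bound x = (1 / av (of_nat (2 * k^4))) * \<delta> * \<beta> (nG x)"

lemma error_bound_nonneg: "error_bound x \<ge> 0"
  unfolding error_bound_def using \<beta>_nonneg nG_nonneg[of x] \<delta> absval_nonneg[OF X.absval] by simp

lemma error_bound_rescale_le: "inverse (a^4) ^ n * error_bound (scG (c^n) x) \<le> r^n * error_bound x"
  using mult_left_mono[OF \<beta>_rescale_le[OF nG_nonneg, of n x], of "(1 / av (of_nat (2 * k^4))) * \<delta>"]
    \<delta> absval_nonneg[OF X.absval]
  unfolding error_bound_def nG_rescale by (simp add: mult_ac)

lemma f_zero_zero: "\<Delta> f 0 0 = 0"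
proof -
  have "nX (\<Delta> f 0 0) \<le> 0"
    using ineq[rule_format, of 0 0] by (simp add: nG_zero \<beta>_zero)
  then show ?thesis
    using X.norm_nonneg[of "\<Delta> f 0 0"] X.norm_eq_0_iff by simp
qed

lemma rescale_step_le: "nX (scX (inverse (c^4)) (f (scG c x)) - f x) \<le> error_bound x"
proof -
  have "av (inverse (2 * c^4)) = 1 / av (of_nat (2 * k^4))"
    by (subst absval_inverse[OF X.absval]) (simp add: inverse_eq_divide)
  then have "nX (scX (inverse (c^4)) (f (scG c x)) - f x)
      = (1 / av (of_nat (2 * k^4))) * nX (\<Delta> f x 0)"
    using rescale_step_eq[OF _ _ f_zero_zero] two_k4_nonzero by (simp add: X.norm_scale)
  also have "\<dots> \<le> (1 / av (of_nat (2 * k^4))) * (\<delta> * \<beta> (nG x))"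
    by (rule mult_left_mono)
      (use ineq[rule_format, of x 0] absval_nonneg[OF X.absval] in \<open>simp_all add: nG_zero \<beta>_zero\<close>)
  finally show ?thesis unfolding error_bound_def by (simp add: mult.assoc)
qed

definition approx :: "nat \<Rightarrow> 'g \<Rightarrow> 'x" where
  "approx n x = scX (inverse (c^4) ^ n) (f (scG (c^n) x))"

lemma approx_step_le: "nX (approx (Suc n) x - approx n x) \<le> r^n * error_bound x"
proof -
  define y where "y = scG (c^n) x"
  have "approx (Suc n) x - approx n x
      = scX (inverse (c^4) ^ n) (scX (inverse (c^4)) (f (scG c y)) - f y)"
    unfolding approx_def y_def by (simp add: X.scale_right_diff_distrib mult.commute)
  then have "nX (approx (Suc n) x - approx n x) \<le> inverse (a^4) ^ n * error_bound y"
    using rescale_step_le[of y] a_pos by (simp add: norm_rescale mult_left_mono)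
  also have "\<dots> \<le> r^n * error_bound x"
    unfolding y_def by (rule error_bound_rescale_le)
  finally show ?thesis .
qed

lemma geometric_bound_antimono: "antimono (\<lambda>n. r^n * error_bound x)"
  using r_nonneg r_less_one error_bound_nonneg
  by (intro antimonoI mult_right_mono power_decreasing) simp_all

lemma geometric_bound_null: "(\<lambda>n. r^n * z) \<longlonglongrightarrow> 0"
  using r_nonneg r_less_one by (intro tendsto_mult_left_zero LIMSEQ_power_zero) simp

definition Q :: "'g \<Rightarrow> 'x" where
  "Q x = (SOME L. (\<lambda>n. nX (approx n x - L)) \<longlonglongrightarrow> 0)"

lemma approx_tendsto_Q: "(\<lambda>n. nX (approx n x - Q x)) \<longlonglongrightarrow> 0"
  unfolding Q_def
  by (rule someI_ex, rule X.convergent_of_steps[OF complete approx_step_le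
        geometric_bound_antimono geometric_bound_null])

lemma Q_close_to_f: "nX (f x - Q x) \<le> error_bound x"
proof -
  have "nX (approx n x - f x) \<le> error_bound x" for n
    using X.norm_diff_le_of_steps[OF approx_step_le geometric_bound_antimono, of 0 n]
    by (simp add: approx_def)
  then show ?thesis
    using X.norm_limit_le[OF approx_tendsto_Q] by (simp add: X.norm_minus_commute)
qed

lemma approx_quartic_diff_le:
  "nX (\<Delta> (approx n) x y) \<le> r^n * (\<delta> * (\<beta> (nG x) + \<beta> (nG y)))"
proof -
  have "\<Delta> (approx n) x y = scX (inverse (c^4) ^ n) (\<Delta> f (scG (c^n) x) (scG (c^n) y))"
    using quartic_diff_rescale[of "inverse (c^4) ^ n" f "c^n"] by (simp add: approx_def[abs_def])
  then have "nX (\<Delta> (approx n) x y)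
      \<le> inverse (a^4) ^ n * (\<delta> * (\<beta> (a^n * nG x) + \<beta> (a^n * nG y)))"
    using ineq[rule_format, of "scG (c^n) x" "scG (c^n) y"] a_pos
    by (simp add: norm_rescale nG_rescale mult_left_mono)
  also have "\<dots> = \<delta> * (inverse (a^4) ^ n * \<beta> (a^n * nG x) + inverse (a^4) ^ n * \<beta> (a^n * nG y))"
    by (simp add: algebra_simps)
  also have "\<dots> \<le> \<delta> * (r^n * \<beta> (nG x) + r^n * \<beta> (nG y))"
    using \<beta>_rescale_le[OF nG_nonneg] \<delta> by (intro mult_left_mono add_mono) simp_all
  finally show ?thesis by (simp add: algebra_simps)
qed

lemma Q_quartic: "\<Delta> Q x y = 0"
proof (rule X.zero_if_norm_le_null)
  define S where "S = {scG c x + y, scG c x - y, x + y, x - y, x, y}"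
  define e where "e n = (\<Sum>z\<in>S. nX (Q z - approx n z))" for n
  have Q_approx: "nX (\<Delta> Q x y - \<Delta> (approx n) x y) \<le> e n" for n
    unfolding quartic_diff_diff[symmetric] e_def S_def
    by (rule norm_quartic_diff_le, rule member_le_sum) (simp_all add: X.norm_nonneg)
  show "nX (\<Delta> Q x y) \<le> e n + r^n * (\<delta> * (\<beta> (nG x) + \<beta> (nG y)))" for n
    using X.norm_add_le[of "\<Delta> Q x y - \<Delta> (approx n) x y" "\<Delta> (approx n) x y"]
      Q_approx[of n] approx_quartic_diff_le[of n x y] by simp
  have "e \<longlonglongrightarrow> 0"
    unfolding e_def using approx_tendsto_Q
    by (intro tendsto_null_sum) (simp add: X.norm_minus_commute)
  then show "(\<lambda>n. e n + r^n * (\<delta> * (\<beta> (nG x) + \<beta> (nG y)))) \<longlonglongrightarrow> 0"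
    using tendsto_add[OF _ geometric_bound_null] by fastforce
qed

lemma quartic_unique:
  assumes "\<And>x y. \<Delta> P x y = 0" "\<And>x y. \<Delta> P' x y = 0"
    and "\<And>x. nX (f x - P x) \<le> error_bound x" "\<And>x. nX (f x - P' x) \<le> error_bound x"
  shows "P = P'"
proof
  fix x
  have "nX (P x - P' x) \<le> r^n * error_bound x" for n
  proof -
    define y where "y = scG (c^n) x"
    have "P x - P' x = scX (inverse (c^4) ^ n) (P y - P' y)"
      using quartic_eq_rescaled[OF _ _ assms(1)] quartic_eq_rescaled[OF _ _ assms(2)]
        two_k4_nonzero unfolding y_def by (simp add: X.scale_right_diff_distrib)
    moreover have "nX (P y - P' y) \<le> error_bound y"
      using X.norm_diff_triangle[of "P y" "P' y" "f y"] assms(3,4)[of y]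
      by (simp add: X.norm_minus_commute[of "P y"])
    ultimately have "nX (P x - P' x) \<le> inverse (a^4) ^ n * error_bound y"
      using a_pos by (simp add: norm_rescale mult_left_mono)
    also have "\<dots> \<le> r^n * error_bound x"
      unfolding y_def by (rule error_bound_rescale_le)
    finally show ?thesis .
  qed
  then have "P x - P' x = 0"
    by (rule X.zero_if_norm_le_null[OF _ geometric_bound_null])
  then show "P x = P' x" by simp
qed

lemma stability:
  "\<exists>!Q. (\<forall>x y. \<Delta> Q x y = 0) \<and>
     (\<forall>x. nX (f x - Q x) \<le> (1 / av (of_nat (2 * k^4))) * \<delta> * \<beta> (nG x))"
  using Q_quartic Q_close_to_f quartic_unique unfolding error_bound_def[symmetric] by blast

end

theorem corollary3p2:
  fixes av :: "'k::field \<Rightarrow> real"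
    and scX :: "'k \<Rightarrow> 'x::ab_group_add \<Rightarrow> 'x" and nX :: "'x \<Rightarrow> real"
    and scG :: "'k \<Rightarrow> 'g::ab_group_add \<Rightarrow> 'g" and nG :: "'g \<Rightarrow> real"
    and k :: nat and \<beta> :: "real \<Rightarrow> real" and \<delta> :: real
    and f :: "'g \<Rightarrow> 'x"
  assumes K: "nonarch_absval av" and K_nontriv: "nontrivial_absval av"
    and X: "nonarch_normed_space av scX nX" and X_complete: "complete_wrt nX"
    and G: "normed_space_over av scG nG"
    and k: "av (of_nat (2 * k^4)) \<noteq> 0"
    and \<beta>_nonneg: "\<forall>t\<ge>0. \<beta> t \<ge> 0"
    and \<beta>1: "\<forall>t\<ge>0. \<beta> (av (of_nat k) * t) \<le> \<beta> (av (of_nat k)) * \<beta> t"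
    and \<beta>2: "\<beta> (av (of_nat k)) < av (of_nat k) ^ 4"
    and \<delta>: "\<delta> > 0"
    and ineq: "\<forall>x y. nX (quartic_diff scG scX k f x y) \<le> \<delta> * (\<beta> (nG x) + \<beta> (nG y))"
  shows "\<exists>!Q :: 'g \<Rightarrow> 'x. (\<forall>x y. quartic_diff scG scX k Q x y = 0) \<and>
           (\<forall>x. nX (f x - Q x) \<le> (1 / av (of_nat (2 * k^4))) * \<delta> * \<beta> (nG x))"
proof -
  interpret X: nonarch_space av scX nX
    using K X by unfold_locales
  interpret G: vector_space scG
    using G unfolding normed_space_over_def by blast
  interpret quartic_stability av scX nX scG k nG \<beta> \<delta> f
    using G X_complete k \<beta>_nonneg \<beta>1 \<beta>2 \<delta> ineq by unfold_locales
  show ?thesis by (rule stability)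
qed

end
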